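(* If $\mathcal R$ is a polyhedral region in $\mathbb Z^k$, then either $\mathcal R$ contains arbitrarily large $k$-dimensional boxes (i.e. for every $n$ it contains a $k$-dimensional box of size $n$), or $\mathcal R$ is a set of measure zero.
   Context: A half-space is $\{\vec z\in\mathbb Z^k:\vec v\cdot\vec z>n\}$ with $\vec v\in\mathbb Z^k$, $n\in\mathbb Z$; a polyhedral region is $\mathbb Z^k$ or an intersection of finitely many half-spaces. A hyperplane is $\{\vec z\in\mathbb Z^k:\vec v\cdot\vec z=n\}$ with $\vec v\in\mathbb Z^k\setminus\{0\}$, $n\in\mathbb Z$; a set of measure zero is a subset of $\mathbb Z^k$ covered by finitely many hyperplanes. A $k$-dimensional box of size $n$ is $\{\vec z\in\mathbb Z^k: c_i\le z_i\le c_i+n,\ i=1,\dots,k\}$ for some $c_i\in\mathbb Z$. *)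

theory Defs
  imports Main
begin

text \<open>Integer vectors in Z^k are represented as functions nat => int that vanish
  at indices >= k (explicit carrier, since k varies).\<close>

definition Zk :: "nat \<Rightarrow> (nat \<Rightarrow> int) set" where
  "Zk k = {z. \<forall>i\<ge>k. z i = 0}"

definition dotk :: "nat \<Rightarrow> (nat \<Rightarrow> int) \<Rightarrow> (nat \<Rightarrow> int) \<Rightarrow> int" where
  "dotk k v z = (\<Sum>i<k. v i * z i)"

definition halfspace :: "nat \<Rightarrow> (nat \<Rightarrow> int) \<Rightarrow> int \<Rightarrow> (nat \<Rightarrow> int) set" where
  "halfspace k v n = {z \<in> Zk k. dotk k v z > n}"

definition hyperplane :: "nat \<Rightarrow> (nat \<Rightarrow> int) \<Rightarrow> int \<Rightarrow> (nat \<Rightarrow> int) set" where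
  "hyperplane k v n = {z \<in> Zk k. dotk k v z = n}"

definition polyhedral_region :: "nat \<Rightarrow> (nat \<Rightarrow> int) set \<Rightarrow> bool" where
  "polyhedral_region k R \<longleftrightarrow>
     R = Zk k \<or>
     (\<exists>hs :: ((nat \<Rightarrow> int) \<times> int) list. hs \<noteq> [] \<and> (\<forall>(v, n) \<in> set hs. v \<in> Zk k) \<and>
        R = (\<Inter>(v, n) \<in> set hs. halfspace k v n))"

definition measure_zero :: "nat \<Rightarrow> (nat \<Rightarrow> int) set \<Rightarrow> bool" where
  "measure_zero k S \<longleftrightarrow> S \<subseteq> Zk k \<and>
     (\<exists>hs :: ((nat \<Rightarrow> int) \<times> int) list. (\<forall>(v, n) \<in> set hs. v \<in> Zk k \<and> v \<noteq> (\<lambda>_. 0)) \<and>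
        S \<subseteq> (\<Union>(v, n) \<in> set hs. hyperplane k v n))"

definition box :: "nat \<Rightarrow> (nat \<Rightarrow> int) \<Rightarrow> int \<Rightarrow> (nat \<Rightarrow> int) set" where
  "box k c n = {z \<in> Zk k. \<forall>i<k. c i \<le> z i \<and> z i \<le> c i + n}"

end

theory Submission imports Defs begin

text \<open>Write the region as \<open>{z. v\<^sub>j \<bullet> z > n\<^sub>j}\<close>. By Gordan's theorem, either some direction \<open>d\<close>
  has \<open>v\<^sub>j \<bullet> d > 0\<close> for all \<open>j\<close>, and then boxes of any size fit around \<open>T d\<close> for large \<open>T\<close>;
  or some nontrivial combination \<open>\<Sum>\<^sub>j l\<^sub>j v\<^sub>j\<close> with \<open>l\<^sub>j \<ge> 0\<close> vanishes, and then \<open>v\<^sub>j\<^sub>0 \<bullet> z\<close> (for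
  \<open>l\<^sub>j\<^sub>0 > 0\<close>) is bounded above and below on the region, which is therefore covered by the
  finitely many hyperplanes \<open>v\<^sub>j\<^sub>0 \<bullet> z = m\<close>. Gordan's theorem is proved over \<open>\<int>\<close> by induction on the
  number of vectors, projecting the remaining vectors orthogonally to the first one.\<close>

lemma dotk_comm: "dotk k u v = dotk k v u"
  by (simp add: dotk_def mult.commute)

lemma dotk_vanishing: "\<forall>i<k. v i = 0 \<Longrightarrow> dotk k v z = 0"
  by (simp add: dotk_def)

lemma dotk_self_nonneg: "0 \<le> dotk k v v"
  by (simp add: dotk_def sum_nonneg)

lemma dotk_self_eq_0D: "dotk k v v = 0 \<Longrightarrow> i < k \<Longrightarrow> v i = 0"
  unfolding dotk_def by (subst (asm) sum_nonneg_eq_0_iff) auto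

lemma dotk_add_scale: "dotk k u (\<lambda>i. a * x i + y i) = a * dotk k u x + dotk k u y"
  by (simp add: dotk_def sum.distrib sum_distrib_left algebra_simps)

lemma dotk_scale_left: "dotk k (\<lambda>i. a * x i) u = a * dotk k x u"
  by (simp add: dotk_def sum_distrib_left algebra_simps)

lemma dotk_diff_scale_left: "dotk k (\<lambda>i. a * x i - b * y i) u = a * dotk k x u - b * dotk k y u"
  by (simp add: dotk_def sum_subtractf sum_distrib_left algebra_simps)

lemma dotk_cong: "\<forall>i<k. x i = y i \<Longrightarrow> dotk k u x = dotk k u y"
  by (simp add: dotk_def)

subsection \<open>Gordan's alternative over the integers\<close>

definition lincomb :: "(nat \<Rightarrow> int) list \<Rightarrow> (nat \<Rightarrow> int) \<Rightarrow> nat \<Rightarrow> int" where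
  "lincomb vs l = (\<lambda>i. \<Sum>j<length vs. l j * (vs ! j) i)"

definition has_positive_direction :: "nat \<Rightarrow> (nat \<Rightarrow> int) list \<Rightarrow> bool" where
  "has_positive_direction k vs \<longleftrightarrow> (\<exists>d. \<forall>v\<in>set vs. 0 < dotk k v d)"

definition has_semipositive_dependence :: "nat \<Rightarrow> (nat \<Rightarrow> int) list \<Rightarrow> bool" where
  "has_semipositive_dependence k vs \<longleftrightarrow>
     (\<exists>l. (\<forall>j<length vs. 0 \<le> l j) \<and> (\<exists>j<length vs. 0 < l j) \<and> (\<forall>i<k. lincomb vs l i = 0))"

lemma lincomb_Cons: "lincomb (v # us) l i = l 0 * v i + lincomb us (\<lambda>j. l (Suc j)) i"
  by (simp add: lincomb_def sum.lessThan_Suc_shift del: sum.lessThan_Suc)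

lemma lincomb_scale: "lincomb vs (\<lambda>j. a * l j) i = a * lincomb vs l i"
  by (simp add: lincomb_def sum_distrib_left mult.assoc)

lemma dotk_lincomb: "dotk k (lincomb vs l) z = (\<Sum>j<length vs. l j * dotk k (vs ! j) z)"
  unfolding dotk_def lincomb_def
  by (simp add: sum_distrib_left sum_distrib_right algebra_simps) (rule sum.swap)

lemma semipositive_dependence_ConsI:
  assumes "0 \<le> c" "\<forall>j<length us. 0 \<le> l j" "0 < c \<or> (\<exists>j<length us. 0 < l j)"
    and "\<forall>i<k. c * v i + lincomb us l i = 0"
  shows "has_semipositive_dependence k (v # us)"
  unfolding has_semipositive_dependence_def
proof (intro exI[of _ "case_nat c l"] conjI)
  show "\<forall>j<length (v # us). 0 \<le> case_nat c l j"
    using assms(1,2) by (auto split: nat.split)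
  show "\<exists>j<length (v # us). 0 < case_nat c l j"
    using assms(3) by (auto intro: exI[of _ 0] exI[of _ "Suc j" for j])
  show "\<forall>i<k. lincomb (v # us) (case_nat c l) i = 0"
    using assms(4) by (simp add: lincomb_Cons)
qed

text \<open>Rejection of \<open>u\<close> from \<open>v\<close>, scaled by \<open>v \<bullet> v\<close> to stay integral.\<close>
definition reject :: "nat \<Rightarrow> (nat \<Rightarrow> int) \<Rightarrow> (nat \<Rightarrow> int) \<Rightarrow> nat \<Rightarrow> int" where
  "reject k v u = (\<lambda>i. dotk k v v * u i - dotk k u v * v i)"

lemma dotk_reject_left: "dotk k (reject k v u) e = dotk k v v * dotk k u e - dotk k u v * dotk k v e"
  unfolding reject_def by (rule dotk_diff_scale_left)

lemma dotk_reject_orthogonal: "dotk k v (reject k v u) = 0"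
  using dotk_reject_left[of k v u v] by (simp add: dotk_comm)

lemma dotk_reject_swap: "dotk k (reject k v u) e = dotk k u (reject k v e)"
proof -
  have "dotk k u (reject k v e) = dotk k (reject k v e) u"
    by (rule dotk_comm)
  then show ?thesis
    by (simp add: dotk_reject_left dotk_comm[of k e] dotk_comm[of k v u])
qed

text \<open>The direction \<open>M \<cdot> reject v e + v\<close> keeps \<open>v \<bullet> v > 0\<close> against \<open>v\<close>, and for large \<open>M\<close> the
  positive term \<open>M (reject v u \<bullet> e)\<close> dominates \<open>u \<bullet> v\<close>.\<close>
lemma positive_direction_lift:
  assumes "0 < dotk k v v" and "has_positive_direction k (map (reject k v) us)"
  shows "has_positive_direction k (v # us)"
proof -
  obtain e where e: "\<And>u. u \<in> set us \<Longrightarrow> 0 < dotk k (reject k v u) e"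
    using assms(2) by (auto simp: has_positive_direction_def)
  define M where "M = 1 + (\<Sum>u\<in>set us. \<bar>dotk k u v\<bar>)"
  define d where "d = (\<lambda>i. M * reject k v e i + v i)"
  have "0 < dotk k u d" if u: "u \<in> set us" for u
  proof -
    have "\<bar>dotk k u v\<bar> \<le> (\<Sum>u\<in>set us. \<bar>dotk k u v\<bar>)"
      using u by (intro member_le_sum) auto
    then have "\<bar>dotk k u v\<bar> < M"
      by (simp add: M_def)
    moreover have "M \<le> M * dotk k u (reject k v e)"
    proof -
      have "1 \<le> dotk k u (reject k v e)"
        using e[OF u] by (simp add: dotk_reject_swap)
      then show ?thesis
        using mult_left_mono[of 1 _ M] \<open>\<bar>dotk k u v\<bar> < M\<close> by simp
    qed
    ultimately show ?thesis
      by (simp add: d_def dotk_add_scale)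
  qed
  moreover have "0 < dotk k v d"
    using assms(1) by (simp add: d_def dotk_add_scale dotk_reject_orthogonal)
  ultimately show ?thesis
    unfolding has_positive_direction_def by auto
qed

lemma lincomb_map_reject:
  "lincomb (map (reject k v) us) l i
     = dotk k v v * lincomb us l i - (\<Sum>j<length us. l j * dotk k (us ! j) v) * v i"
  by (simp add: lincomb_def reject_def sum_subtractf sum_distrib_left sum_distrib_right algebra_simps)

text \<open>A dependence of the projected vectors says \<open>(v \<bullet> v) \<Sum>\<^sub>j \<mu>\<^sub>j u\<^sub>j = C v\<close>; testing against \<open>d\<close>
  forces \<open>C < 0\<close>, so \<open>-C\<close> is a valid coefficient for \<open>v\<close>.\<close>
lemma semipositive_dependence_lift:
  assumes a: "0 < dotk k v v" and dep: "has_semipositive_dependence k (map (reject k v) us)"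
    and d: "\<forall>u\<in>set us. 0 < dotk k u d" "dotk k v d \<le> 0"
  shows "has_semipositive_dependence k (v # us)"
proof -
  obtain mu where mu: "\<forall>j<length us. 0 \<le> mu j" "\<exists>j<length us. 0 < mu j"
    and comb: "\<forall>i<k. lincomb (map (reject k v) us) mu i = 0"
    using dep by (auto simp: has_semipositive_dependence_def)
  define C where "C = (\<Sum>j<length us. mu j * dotk k (us ! j) v)"
  have parallel: "dotk k v v * lincomb us mu i = C * v i" if "i < k" for i
    using comb that by (simp add: lincomb_map_reject C_def)
  have "0 < dotk k (lincomb us mu) d"
  proof -
    obtain j where "j < length us" "0 < mu j"
      using mu(2) by blast
    moreover have "0 < dotk k (us ! i) d" if "i < length us" for i
      using d(1) that by simp
    ultimately show ?thesis
      unfolding dotk_lincomb using mu(1)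
      by (intro sum_pos2[of _ j]) (auto intro: mult_nonneg_nonneg less_imp_le)
  qed
  then have "0 < dotk k v v * dotk k (lincomb us mu) d"
    using a by simp
  also have "\<dots> = dotk k (\<lambda>i. dotk k v v * lincomb us mu i) d"
    by (rule dotk_scale_left[symmetric])
  also have "\<dots> = dotk k (\<lambda>i. C * v i) d"
    using parallel by (simp add: dotk_def)
  also have "\<dots> = C * dotk k v d"
    by (rule dotk_scale_left)
  finally have "C < 0"
    using d(2) by (metis leD mult_nonneg_nonpos not_le)
  then show ?thesis
    using mu a parallel
    by (intro semipositive_dependence_ConsI[where c = "- C" and l = "\<lambda>j. dotk k v v * mu j"])
      (auto simp: lincomb_scale)
qed

theorem gordan_alternative: "has_positive_direction k vs \<or> has_semipositive_dependence k vs"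
proof (induction "length vs" arbitrary: vs)
  case 0
  then show ?case
    by (simp add: has_positive_direction_def)
next
  case (Suc m)
  then obtain v us where vs: "vs = v # us" and len: "length us = m"
    by (cases vs) auto
  show ?case
  proof (cases "dotk k v v = 0")
    case True
    then have "has_semipositive_dependence k vs"
      unfolding vs using dotk_self_eq_0D
      by (intro semipositive_dependence_ConsI[where c = 1 and l = "\<lambda>_. 0"]) (auto simp: lincomb_def)
    then show ?thesis ..
  next
    case False
    then have a: "0 < dotk k v v"
      using dotk_self_nonneg[of k v] by simp
    from Suc(1)[of us] len consider
      (dir) d where "\<forall>u\<in>set us. 0 < dotk k u d" | (dep) "has_semipositive_dependence k us"
      by (auto simp: has_positive_direction_def)
    then show ?thesis
    proof cases
      case dir
      show ?thesis
      proof (cases "0 < dotk k v d")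
        case True
        with dir show ?thesis
          by (auto simp: vs has_positive_direction_def)
      next
        case False
        from Suc(1)[of "map (reject k v) us"] len show ?thesis
          using positive_direction_lift[OF a] semipositive_dependence_lift[OF a _ dir] False
          by (auto simp: vs)
      qed
    next
      case dep
      then obtain l where "\<forall>j<length us. 0 \<le> l j" "\<exists>j<length us. 0 < l j" "\<forall>i<k. lincomb us l i = 0"
        by (auto simp: has_semipositive_dependence_def)
      then have "has_semipositive_dependence k vs"
        unfolding vs by (intro semipositive_dependence_ConsI[where c = 0]) auto
      then show ?thesis ..
    qed
  qed
qed

lemma box_subset_Zk: "box k c n \<subseteq> Zk k"
  by (auto simp: box_def)

lemma box_dotk_lower_bound:
  assumes "z \<in> box k c n"
  shows "dotk k v c - n * (\<Sum>i<k. \<bar>v i\<bar>) \<le> dotk k v z"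
proof -
  have "- (n * (\<Sum>i<k. \<bar>v i\<bar>)) = (\<Sum>i<k. - (n * \<bar>v i\<bar>))"
    by (simp add: sum_negf sum_distrib_left)
  also have "\<dots> \<le> (\<Sum>i<k. v i * (z i - c i))"
  proof (rule sum_mono)
    fix i assume "i \<in> {..<k}"
    then have "0 \<le> z i - c i" "z i - c i \<le> n"
      using assms unfolding box_def by auto
    then have "\<bar>v i * (z i - c i)\<bar> \<le> \<bar>v i\<bar> * n"
      by (simp add: abs_mult mult_left_mono)
    then show "- (n * \<bar>v i\<bar>) \<le> v i * (z i - c i)"
      by (simp add: abs_le_iff mult.commute)
  qed
  also have "\<dots> = dotk k v z - dotk k v c"
    by (simp add: dotk_def sum_subtractf algebra_simps)
  finally show ?thesis
    by simp
qed

lemma scaled_box_subset_halfspace: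
  assumes "1 \<le> dotk k v d" and "\<bar>n\<bar> + N * (\<Sum>i<k. \<bar>v i\<bar>) < T" and "0 \<le> N"
  shows "box k (\<lambda>i. T * d i) N \<subseteq> halfspace k v n"
proof
  fix z assume z: "z \<in> box k (\<lambda>i. T * d i) N"
  have "0 \<le> N * (\<Sum>i<k. \<bar>v i\<bar>)"
    using assms(3) by (simp add: sum_nonneg)
  then have "T \<le> T * dotk k v d"
    using assms(1,2) mult_left_mono[of 1 "dotk k v d" T] by simp
  also have "\<dots> = dotk k v (\<lambda>i. T * d i)"
    by (simp add: dotk_comm[of k v] dotk_scale_left)
  finally have "n < dotk k v z"
    using box_dotk_lower_bound[OF z, of v] assms(2) by linarith
  then show "z \<in> halfspace k v n"
    using z box_subset_Zk by (auto simp: halfspace_def)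
qed

lemma halfspaces_contain_large_boxes:
  assumes "\<forall>(v, n)\<in>set hs. 0 < dotk k v d \<or> (\<forall>i<k. v i = 0) \<and> n < 0"
  shows "\<exists>c\<in>Zk k. box k c (int N) \<subseteq> (\<Inter>(v, n)\<in>set hs. halfspace k v n)"
proof -
  define d0 where "d0 = (\<lambda>i. if i < k then d i else 0)"
  define weight :: "(nat \<Rightarrow> int) \<times> int \<Rightarrow> int"
    where "weight = (\<lambda>(v, n). \<bar>n\<bar> + int N * (\<Sum>i<k. \<bar>v i\<bar>))"
  define T where "T = 1 + sum weight (set hs)"
  have "box k (\<lambda>i. T * d0 i) (int N) \<subseteq> halfspace k v n" if vn: "(v, n) \<in> set hs" for v n
  proof (cases "\<forall>i<k. v i = 0")
    case True
    then show ?thesis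
      using assms vn box_subset_Zk by (fastforce simp: halfspace_def dotk_vanishing)
  next
    case False
    have "dotk k v d0 = dotk k v d"
      by (rule dotk_cong) (simp add: d0_def)
    then have "1 \<le> dotk k v d0"
      using assms vn False by fastforce
    moreover have "weight (v, n) \<le> sum weight (set hs)"
      using vn by (intro member_le_sum) (auto simp: weight_def sum_nonneg)
    then have "\<bar>n\<bar> + int N * (\<Sum>i<k. \<bar>v i\<bar>) < T"
      by (simp add: T_def weight_def)
    ultimately show ?thesis
      by (rule scaled_box_subset_halfspace) simp
  qed
  moreover have "(\<lambda>i. T * d0 i) \<in> Zk k"
    by (simp add: Zk_def d0_def)
  ultimately show ?thesis
    by blast
qed

lemma measure_zero_if_dotk_bounded:
  assumes "S \<subseteq> Zk k" "v \<in> Zk k" "i < k" "v i \<noteq> 0"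
    and bounded: "\<forall>z\<in>S. lo \<le> dotk k v z \<and> dotk k v z \<le> hi"
  shows "measure_zero k S"
  unfolding measure_zero_def
proof (intro conjI exI[of _ "map (\<lambda>m. (v, m)) [lo..hi]"])
  show "\<forall>(w, m)\<in>set (map (\<lambda>m. (v, m)) [lo..hi]). w \<in> Zk k \<and> w \<noteq> (\<lambda>_. 0)"
    using assms(2,4) by auto
  show "S \<subseteq> (\<Union>(w, m)\<in>set (map (\<lambda>m. (v, m)) [lo..hi]). hyperplane k w m)"
    using assms(1) bounded by (fastforce simp: hyperplane_def)
qed (fact assms(1))

text \<open>Pairing the half-space inequalities with a semipositive dependence \<open>\<Sum>\<^sub>j l\<^sub>j v\<^sub>j = 0\<close>
  bounds \<open>l\<^sub>j\<^sub>0 (v\<^sub>j\<^sub>0 \<bullet> z)\<close> from above by the other constraints.\<close>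
lemma dotk_bounded_above_on_halfspaces:
  assumes l: "\<forall>j<length hs. 0 \<le> l j" "\<forall>i<k. lincomb (map fst hs) l i = 0"
    and j0: "j0 < length hs" "0 < l j0"
  shows "\<exists>B. \<forall>z\<in>(\<Inter>(v, n)\<in>set hs. halfspace k v n). dotk k (fst (hs ! j0)) z \<le> B"
proof (intro exI ballI)
  define J where "J = {..<length hs} - {j0}"
  define B where "B = (\<Sum>j\<in>J. l j * (snd (hs ! j) + 1))"
  fix z assume z: "z \<in> (\<Inter>(v, n)\<in>set hs. halfspace k v n)"
  have gt: "snd (hs ! j) + 1 \<le> dotk k (fst (hs ! j)) z" if "j < length hs" for j
    using z nth_mem[OF that] by (cases "hs ! j") (auto simp: halfspace_def)
  have "0 = dotk k (lincomb (map fst hs) l) z"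
    using l(2) by (simp add: dotk_def)
  also have "\<dots> = l j0 * dotk k (fst (hs ! j0)) z + (\<Sum>j\<in>J. l j * dotk k (fst (hs ! j)) z)"
    using j0(1) by (simp add: dotk_lincomb J_def sum.remove)
  also have "\<dots> \<ge> l j0 * dotk k (fst (hs ! j0)) z + B"
    unfolding B_def J_def using l(1) gt by (auto intro!: sum_mono mult_left_mono)
  finally have "l j0 * dotk k (fst (hs ! j0)) z \<le> - B"
    by linarith
  moreover have "dotk k (fst (hs ! j0)) z \<le> max 0 (l j0 * dotk k (fst (hs ! j0)) z)"
    using j0(2) by (cases "dotk k (fst (hs ! j0)) z \<le> 0") (auto simp: mult_le_cancel_right1)
  ultimately show "dotk k (fst (hs ! j0)) z \<le> \<bar>B\<bar>"
    by linarith
qed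

lemma measure_zero_empty: "measure_zero k {}"
  unfolding measure_zero_def by (intro conjI exI[of _ "[]"]) auto

text \<open>Constraints \<open>0 \<bullet> z > n\<close> are either void or make the region empty; Gordan's alternative is
  applied to the remaining normal vectors.\<close>
lemma halfspaces_large_boxes_or_measure_zero:
  assumes "\<forall>(v, n)\<in>set hs. v \<in> Zk k"
  defines "P \<equiv> \<Inter>(v, n)\<in>set hs. halfspace k v n"
  shows "(\<forall>N::nat. \<exists>c\<in>Zk k. box k c (int N) \<subseteq> P) \<or> measure_zero k P"
proof (cases "\<exists>(v, n)\<in>set hs. (\<forall>i<k. v i = 0) \<and> 0 \<le> n")
  case True
  then have "P = {}"
    by (force simp: P_def halfspace_def dotk_vanishing)
  then show ?thesis
    using measure_zero_empty by simp
next
  case False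
  define hs' where "hs' = filter (\<lambda>(v, n). \<exists>i<k. v i \<noteq> 0) hs"
  from gordan_alternative[of k "map fst hs'"] show ?thesis
  proof
    assume "has_positive_direction k (map fst hs')"
    then obtain d where "\<forall>(v, n)\<in>set hs'. 0 < dotk k v d"
      by (force simp: has_positive_direction_def)
    then have "\<forall>(v, n)\<in>set hs. 0 < dotk k v d \<or> (\<forall>i<k. v i = 0) \<and> n < 0"
      using False by (fastforce simp: hs'_def)
    then show ?thesis
      unfolding P_def using halfspaces_contain_large_boxes by blast
  next
    assume "has_semipositive_dependence k (map fst hs')"
    then obtain l j0 where l: "\<forall>j<length hs'. 0 \<le> l j" "\<forall>i<k. lincomb (map fst hs') l i = 0"
      and j0: "j0 < length hs'" "0 < l j0"
      by (auto simp: has_semipositive_dependence_def)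
    obtain v n where vn: "hs' ! j0 = (v, n)"
      by fastforce
    have "(v, n) \<in> set hs'"
      using nth_mem[OF j0(1)] vn by simp
    then have "(v, n) \<in> set hs" "\<exists>i<k. v i \<noteq> 0"
      by (auto simp: hs'_def)
    moreover obtain B where "\<forall>z\<in>P. dotk k v z \<le> B"
      using dotk_bounded_above_on_halfspaces[OF l j0] vn
      by (fastforce simp: P_def hs'_def)
    moreover have "P \<subseteq> Zk k"
      using \<open>(v, n) \<in> set hs\<close> by (auto simp: P_def halfspace_def)
    ultimately show ?thesis
      using assms(1) measure_zero_if_dotk_bounded[of P k v _ n B]
      by (fastforce simp: P_def halfspace_def)
  qed
qed

theorem lemmaB21:
  fixes k :: nat and R :: "(nat \<Rightarrow> int) set"
  assumes "polyhedral_region k R"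
  shows "(\<forall>n::nat. \<exists>c \<in> Zk k. box k c (int n) \<subseteq> R) \<or> measure_zero k R"
proof -
  consider "R = Zk k"
    | hs where "\<forall>(v, n) \<in> set hs. v \<in> Zk k" "R = (\<Inter>(v, n) \<in> set hs. halfspace k v n)"
    using assms unfolding polyhedral_region_def by blast
  then show ?thesis
  proof cases
    case 1
    moreover have "(\<lambda>_. 0) \<in> Zk k"
      by (simp add: Zk_def)
    ultimately show ?thesis
      using box_subset_Zk by blast
  next
    case 2
    then show ?thesis
      using halfspaces_large_boxes_or_measure_zero by blast
  qed
qed

end
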